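(* Let $m,n$ be positive integers with at least one of $m,n$ greater than $1$. The pseudograph $\mathcal{K}_{m,n}$ admits a cylindrical knight's tour if and only if neither of the following holds: (i) $m=2$ and $n=2$; (ii) $m$ is odd and $n$ is even.
   Context: Let $\mathcal{P}$ be the graph with vertex set $\mathbb{Z}^2$ in which $(a,b)$ and $(a',b')$ are adjacent iff $\{|a-a'|,|b-b'|\}=\{1,2\}$. For positive integers $m,n$ let $G$ be the group of automorphisms of $\mathcal{P}$ generated by $\tau(a,b)=(a+m,b)$ and $\sigma(a,b)=(m-1-a,\,b+n)$; it acts freely, and the knight's pseudograph of the $m\times n$ Klein bottle board is $\mathcal{K}_{m,n}=\mathcal{P}/G$ (vertices and edges are orbits; multiple edges and loops may occur), with covering map $\phi_K:\mathcal{P}\to\mathcal{K}_{m,n}$. A knight's tour is a closed walk visiting every vertex exactly once apart from the repeated start/end vertex (a Hamiltonian cycle). Regard a tour as a closed walk starting and ending at vertex $(0,0)$; it lifts uniquely to a walk in $\mathcal{P}$ starting at $(0,0)$. The tour is cylindrical if this lift ends at $(m,0)$ or $(-m,0)$ (equivalently, its homotopy class is the image of a generator of the fundamental group of the cylinder obtained by identifying only the left and right sides of the board). *)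

theory Defs
  imports Main
begin

definition knight_adj :: "int \<times> int \<Rightarrow> int \<times> int \<Rightarrow> bool" where
  "knight_adj p q \<longleftrightarrow> {\<bar>fst p - fst q\<bar>, \<bar>snd p - snd q\<bar>} = {1, 2}"

definition kb_tau :: "int \<Rightarrow> int \<times> int \<Rightarrow> int \<times> int" where
  "kb_tau m = (\<lambda>(a, b). (a + m, b))"
definition kb_tau_inv :: "int \<Rightarrow> int \<times> int \<Rightarrow> int \<times> int" where
  "kb_tau_inv m = (\<lambda>(a, b). (a - m, b))"
definition kb_sigma :: "int \<Rightarrow> int \<Rightarrow> int \<times> int \<Rightarrow> int \<times> int" where
  "kb_sigma m n = (\<lambda>(a, b). (m - 1 - a, b + n))"
definition kb_sigma_inv :: "int \<Rightarrow> int \<Rightarrow> int \<times> int \<Rightarrow> int \<times> int" where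
  "kb_sigma_inv m n = (\<lambda>(a, b). (m - 1 - a, b - n))"

inductive_set kbG :: "int \<Rightarrow> int \<Rightarrow> (int \<times> int \<Rightarrow> int \<times> int) set" for m n where
  kbG_id: "id \<in> kbG m n"
| kbG_tau: "g \<in> kbG m n \<Longrightarrow> kb_tau m \<circ> g \<in> kbG m n"
| kbG_tau_inv: "g \<in> kbG m n \<Longrightarrow> kb_tau_inv m \<circ> g \<in> kbG m n"
| kbG_sigma: "g \<in> kbG m n \<Longrightarrow> kb_sigma m n \<circ> g \<in> kbG m n"
| kbG_sigma_inv: "g \<in> kbG m n \<Longrightarrow> kb_sigma_inv m n \<circ> g \<in> kbG m n"

text \<open>Vertices of K_{m,n}: two lattice points represent the same vertex iff same G-orbit.\<close>
definition kb_same_vertex :: "int \<Rightarrow> int \<Rightarrow> int \<times> int \<Rightarrow> int \<times> int \<Rightarrow> bool" where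
  "kb_same_vertex m n p q \<longleftrightarrow> (\<exists>g \<in> kbG m n. g p = q)"

text \<open>Edges of K_{m,n}: the P-edges {p,p'} and {q,q'} represent the same edge iff same G-orbit.\<close>
definition kb_same_edge :: "int \<Rightarrow> int \<Rightarrow> (int \<times> int) \<times> (int \<times> int) \<Rightarrow> (int \<times> int) \<times> (int \<times> int) \<Rightarrow> bool" where
  "kb_same_edge m n e f \<longleftrightarrow> (\<exists>g \<in> kbG m n. {g (fst e), g (snd e)} = {fst f, snd f})"

text \<open>A knight's tour (Hamiltonian cycle) of K_{m,n}, regarded as a closed walk of length N
  starting and ending at the vertex of (0,0), given by its unique lift p(0),...,p(N) to P
  starting at (0,0): consecutive lift points are knight-adjacent, the walk is closed in the
  quotient, it visits every vertex exactly once (apart from the repeated start/end vertex),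
  and it uses no edge of K_{m,n} twice.\<close>
definition kb_knight_tour :: "int \<Rightarrow> int \<Rightarrow> (nat \<Rightarrow> int \<times> int) \<Rightarrow> nat \<Rightarrow> bool" where
  "kb_knight_tour m n p N \<longleftrightarrow>
     p 0 = (0, 0) \<and>
     (\<forall>i<N. knight_adj (p i) (p (Suc i))) \<and>
     kb_same_vertex m n (p 0) (p N) \<and>
     (\<forall>i<N. \<forall>j<N. i \<noteq> j \<longrightarrow> \<not> kb_same_vertex m n (p i) (p j)) \<and>
     (\<forall>q. \<exists>i<N. kb_same_vertex m n q (p i)) \<and>
     (\<forall>i<N. \<forall>j<N. i \<noteq> j \<longrightarrow>
        \<not> kb_same_edge m n (p i, p (Suc i)) (p j, p (Suc j)))"

definition kb_cylindrical_tour :: "int \<Rightarrow> int \<Rightarrow> (nat \<Rightarrow> int \<times> int) \<Rightarrow> nat \<Rightarrow> bool" where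
  "kb_cylindrical_tour m n p N \<longleftrightarrow>
     kb_knight_tour m n p N \<and> (p N = (m, 0) \<or> p N = (-m, 0))"

end

(*
  Every element of G acts as (a, b) |-> (a + j m, b + k n) for even k and as
  (a, b) |-> (m - 1 + j m - a, b + k n) for odd k.  Hence the vertices of K_{m,n} are represented
  by the cells [0, m) x [0, n), and a cylindrical tour is a knight walk from (0, 0) to (m, 0) or
  (-m, 0) that visits all m n cells once.

  Necessity: every knight move changes the parity of a + b, so the length m n of the walk has
  the parity of m; this excludes odd m with even n.  On the 2 x 2 board a move by (+-1, +-2)
  returns to the same vertex, so all four moves change the column by +-2, and they cannot add
  up to +-2.

  Sufficiency: a walk on a t x n board ending at (t, 0) can be repeated K times side by side,
  giving width K t.  A walk that stays inside its strip can be wrapped between two copies of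
  another such walk of width u, giving width + 2 u: the twist exchanges the two outer copies,
  which together visit the outer strips once.  Columns of width 1 (odd n >= 3), strips of
  width 2 (even n >= 4) and a few explicit walks for n = 1, 2 give all admissible sizes.  With
  at least three moves distinct vertices force distinct edges; the 2 x 1 tour is checked
  directly.
*)

theory Submission
  imports Defs
begin

section \<open>The deck group and the cells of the board\<close>

(* kb_motion m n k j = tau^j o sigma^k *)

definition kb_motion :: "int \<Rightarrow> int \<Rightarrow> int \<Rightarrow> int \<Rightarrow> int \<times> int \<Rightarrow> int \<times> int" where
  "kb_motion m n k j = (\<lambda>(a, b). (if even k then a + j * m else m - 1 + j * m - a, b + k * n))"

lemma kb_motion_apply [simp]:
  "kb_motion m n k j (a, b) = (if even k then a + j * m else m - 1 + j * m - a, b + k * n)"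
  by (simp add: kb_motion_def)

lemma kb_motion_0_0: "kb_motion m n 0 0 = id"
  by (auto simp: fun_eq_iff)

lemma kb_motion_comp:
  "kb_motion m n 0 i \<circ> kb_motion m n k j = kb_motion m n k (j + i)"
  "kb_tau m \<circ> kb_motion m n k j = kb_motion m n k (j + 1)"
  "kb_tau_inv m \<circ> kb_motion m n k j = kb_motion m n k (j - 1)"
  "kb_sigma m n \<circ> kb_motion m n k j = kb_motion m n (k + 1) (- j)"
  "kb_sigma_inv m n \<circ> kb_motion m n k j = kb_motion m n (k - 1) (- j)"
  by (auto simp: fun_eq_iff kb_tau_def kb_tau_inv_def kb_sigma_def kb_sigma_inv_def algebra_simps)

lemma kbG_comp: "g \<in> kbG m n \<Longrightarrow> h \<in> kbG m n \<Longrightarrow> g \<circ> h \<in> kbG m n"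
  by (induction rule: kbG.induct) (auto simp: comp_assoc intro: kbG.intros)

lemma kbG_eq: "kbG m n = {kb_motion m n k j | k j. True}"
proof (intro equalityI subsetI)
  fix g assume "g \<in> kbG m n"
  then show "g \<in> {kb_motion m n k j | k j. True}"
  proof induction
    case kbG_id
    show ?case unfolding kb_motion_0_0[of m n, symmetric] by blast
  qed (auto simp only: kb_motion_comp, blast+)
next
  have translation: "kb_motion m n 0 j \<in> kbG m n" for j
  proof (induction j rule: int_induct[where k = 0])
    case base
    then show ?case by (simp only: kb_motion_0_0 kbG.kbG_id)
  next
    case (step1 i)
    then show ?case using kbG.kbG_tau by (metis kb_motion_comp(2))
  next
    case (step2 i)
    then show ?case using kbG.kbG_tau_inv by (metis kb_motion_comp(3))
  qed
  have twist: "kb_motion m n k 0 \<in> kbG m n" for k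
  proof (induction k rule: int_induct[where k = 0])
    case base
    then show ?case by (simp only: kb_motion_0_0 kbG.kbG_id)
  next
    case (step1 i)
    then show ?case using kbG.kbG_sigma by (metis kb_motion_comp(4) minus_zero)
  next
    case (step2 i)
    then show ?case using kbG.kbG_sigma_inv by (metis kb_motion_comp(5) minus_zero)
  qed
  fix g assume "g \<in> {kb_motion m n k j | k j. True}"
  then obtain k j where "g = kb_motion m n 0 j \<circ> kb_motion m n k 0"
    using kb_motion_comp(1) by fastforce
  then show "g \<in> kbG m n" using kbG_comp translation twist by simp
qed

definition kb_cell :: "int \<Rightarrow> int \<Rightarrow> int \<times> int \<Rightarrow> int \<times> int" where
  "kb_cell m n p = ((if even (snd p div n) then fst p else m - 1 - fst p) mod m, snd p mod n)"

lemma kb_cell_motion: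
  assumes "0 < n"
  shows "kb_cell m n (kb_motion m n k j p) = kb_cell m n p"
proof -
  obtain a b where p: "p = (a, b)" by fastforce
  let ?x = "if even k then a + j * m else m - 1 + j * m - a"
  have "(b + k * n) div n = b div n + k" "(b + k * n) mod n = b mod n"
    using assms by simp_all
  moreover have "(if even (b div n + k) then ?x else m - 1 - ?x)
      = (if even (b div n) then a else m - 1 - a) + (if even k = even (b div n) then j else - j) * m"
    by (cases "even k"; cases "even (b div n)") (auto simp: algebra_simps)
  ultimately show ?thesis
    unfolding p kb_cell_def by (simp only: kb_motion_apply fst_conv snd_conv mod_mult_self1)
qed

lemma mod_eq_imp_eq_add_mult:
  fixes x y m :: int
  assumes "x mod m = y mod m"
  shows "y = x + (y div m - x div m) * m"
proof -
  have "x = x div m * m + x mod m" "y = y div m * m + y mod m" by simp_all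
  then show ?thesis using assms unfolding left_diff_distrib by linarith
qed

lemma kb_same_vertex_iff_cell:
  assumes "0 < n"
  shows "kb_same_vertex m n p q \<longleftrightarrow> kb_cell m n p = kb_cell m n q"
proof
  assume "kb_same_vertex m n p q"
  then obtain k j where "q = kb_motion m n k j p" unfolding kb_same_vertex_def kbG_eq by blast
  then show "kb_cell m n p = kb_cell m n q" using kb_cell_motion[OF assms] by metis
next
  assume cell: "kb_cell m n p = kb_cell m n q"
  obtain a b a' b' where p: "p = (a, b)" and q: "q = (a', b')" by fastforce
  define k where "k = b' div n - b div n"
  have "b' = b + k * n"
    using mod_eq_imp_eq_add_mult[of b n b'] cell unfolding p q k_def kb_cell_def by simp
  moreover obtain i where i: "(if even (b' div n) then a' else m - 1 - a')
      = (if even (b div n) then a else m - 1 - a) + i * m"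
    using mod_eq_imp_eq_add_mult cell unfolding p q kb_cell_def prod.inject fst_conv snd_conv by blast
  define j where "j = (if even (b' div n) then i else - i)"
  have "a' = (if even k then a + j * m else m - 1 + j * m - a)"
    using i unfolding k_def j_def by (auto split: if_splits)
  ultimately have "kb_motion m n k j p = q" unfolding p q by simp
  then show "kb_same_vertex m n p q" unfolding kb_same_vertex_def kbG_eq by blast
qed

lemma kb_cell_eq_iff_motion:
  assumes "0 < n"
  shows "kb_cell m n p = kb_cell m n q \<longleftrightarrow> (\<exists>k j. q = kb_motion m n k j p)"
  unfolding kb_same_vertex_iff_cell[OF assms, symmetric] kb_same_vertex_def kbG_eq by blast

lemma kb_cell_mem_board: "0 < m \<Longrightarrow> 0 < n \<Longrightarrow> kb_cell m n p \<in> {0..<m} \<times> {0..<n}"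
  unfolding kb_cell_def by auto

lemma kb_cell_of_board: "s \<in> {0..<m} \<times> {0..<n} \<Longrightarrow> kb_cell m n s = s"
  unfolding kb_cell_def by (cases s) auto

section \<open>Necessary conditions\<close>

lemma kb_knight_tour_cells_bij:
  assumes "0 < m" "0 < n" and tour: "kb_knight_tour m n p N"
  shows "bij_betw (kb_cell m n \<circ> p) {..<N} ({0..<m} \<times> {0..<n})"
proof (rule bij_betw_imageI)
  have "\<forall>i<N. \<forall>j<N. i \<noteq> j \<longrightarrow> kb_cell m n (p i) \<noteq> kb_cell m n (p j)"
    using tour \<open>0 < n\<close> by (simp add: kb_knight_tour_def kb_same_vertex_iff_cell)
  then show "inj_on (kb_cell m n \<circ> p) {..<N}"
    unfolding inj_on_def by (metis comp_apply lessThan_iff)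
  show "(kb_cell m n \<circ> p) ` {..<N} = {0..<m} \<times> {0..<n}"
  proof
    show "(kb_cell m n \<circ> p) ` {..<N} \<subseteq> {0..<m} \<times> {0..<n}"
      by (rule image_subsetI) (simp only: comp_apply kb_cell_mem_board[OF assms(1,2)])
  next
    show "{0..<m} \<times> {0..<n} \<subseteq> (kb_cell m n \<circ> p) ` {..<N}"
    proof
    fix s assume "s \<in> {0..<m} \<times> {0..<n}"
    moreover obtain i where "i < N" "kb_same_vertex m n s (p i)"
      using tour unfolding kb_knight_tour_def by blast
    ultimately show "s \<in> (kb_cell m n \<circ> p) ` {..<N}"
      using \<open>0 < n\<close> by (auto simp: kb_same_vertex_iff_cell kb_cell_of_board)
  qed
  qed
qed

lemma kb_knight_tour_length:
  assumes "0 < m" "0 < n" "kb_knight_tour m n p N"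
  shows "int N = m * n"
  using bij_betw_same_card[OF kb_knight_tour_cells_bij[OF assms]] assms(1,2) by simp

lemma knight_adj_iff:
  "knight_adj p q \<longleftrightarrow> (\<bar>fst p - fst q\<bar> = 1 \<and> \<bar>snd p - snd q\<bar> = 2) \<or>
     (\<bar>fst p - fst q\<bar> = 2 \<and> \<bar>snd p - snd q\<bar> = 1)"
  unfolding knight_adj_def doubleton_eq_iff by auto

lemma knight_adj_odd_sum_diff:
  assumes "knight_adj p q"
  shows "odd ((fst q + snd q) - (fst p + snd p))"
proof -
  have "(fst q + snd q) - (fst p + snd p) \<in> {-3, -1, 1, 3}"
    using assms unfolding knight_adj_iff by (auto simp: abs_if split: if_splits)
  moreover have "\<forall>d::int \<in> {-3, -1, 1, 3}. odd d" by simp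
  ultimately show ?thesis by blast
qed

lemma knight_walk_parity:
  assumes "p 0 = (0, 0)" "\<forall>i<N. knight_adj (p i) (p (Suc i))" "i \<le> N"
  shows "even (fst (p i) + snd (p i)) \<longleftrightarrow> even i"
  using assms(3)
proof (induction i)
  case (Suc i)
  then have "knight_adj (p i) (p (Suc i))" using assms(2) by simp
  then have "odd ((fst (p (Suc i)) + snd (p (Suc i))) - (fst (p i) + snd (p i)))"
    by (rule knight_adj_odd_sum_diff)
  then show ?case using Suc by auto
qed (simp add: assms(1))

lemma kb_cylindrical_tour_odd_width_imp_odd_height:
  assumes "0 < m" "0 < n" and tour: "kb_cylindrical_tour m n p N" and "odd m"
  shows "odd n"
proof -
  have "kb_knight_tour m n p N" using tour unfolding kb_cylindrical_tour_def by blast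
  then have "int N = m * n" and "even (fst (p N) + snd (p N)) \<longleftrightarrow> even N"
    using kb_knight_tour_length[OF assms(1,2)] knight_walk_parity[of p N N]
    unfolding kb_knight_tour_def by auto
  moreover have "odd (fst (p N) + snd (p N))"
    using tour \<open>odd m\<close> unfolding kb_cylindrical_tour_def by auto
  ultimately show ?thesis by (metis even_mult_iff even_of_nat)
qed

lemma kb_knight_tour_step_cells_differ:
  assumes "0 < n" and tour: "kb_knight_tour m n p N" and "2 \<le> N" "i < N"
  shows "kb_cell m n (p i) \<noteq> kb_cell m n (p (Suc i))"
proof (cases "Suc i < N")
  case True
  then show ?thesis using tour \<open>0 < n\<close> by (simp add: kb_knight_tour_def kb_same_vertex_iff_cell)
next
  case False
  then have "Suc i = N" "i \<noteq> 0" using assms(3,4) by auto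
  then have "kb_cell m n (p (Suc i)) = kb_cell m n (p 0)"
    using tour kb_same_vertex_iff_cell[OF \<open>0 < n\<close>] unfolding kb_knight_tour_def by metis
  moreover have "kb_cell m n (p i) \<noteq> kb_cell m n (p 0)"
    using tour kb_same_vertex_iff_cell[OF \<open>0 < n\<close>] \<open>i \<noteq> 0\<close> \<open>i < N\<close>
    unfolding kb_knight_tour_def by (metis less_nat_zero_code neq0_conv)
  ultimately show ?thesis by simp
qed

lemma kb_cell_2_2_short_step:
  assumes "\<bar>fst p - fst q\<bar> = 1" "\<bar>snd p - snd q\<bar> = 2"
  shows "kb_cell 2 2 p = kb_cell 2 2 q"
proof -
  obtain a b a' b' where p: "p = (a, b)" and q: "q = (a', b')" by fastforce
  have "a' = a + 1 \<or> a' = a - 1" "b' = b + 2 \<or> b' = b - 2"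
    using assms unfolding p q by auto
  then have "q = kb_motion 2 2 ((b' - b) div 2) (a + (a' - a - 1) div 2) p"
    unfolding p q by (elim disjE) simp_all
  then show ?thesis using kb_cell_motion[of 2 2] by simp
qed

lemma no_kb_cylindrical_tour_2_2: "\<not> kb_cylindrical_tour 2 2 p N"
proof
  assume cyl: "kb_cylindrical_tour 2 2 p N"
  then have tour: "kb_knight_tour 2 2 p N" unfolding kb_cylindrical_tour_def by blast
  then have N: "N = 4" using kb_knight_tour_length[of 2 2 p N] by simp
  have long_step: "\<bar>fst (p (Suc i)) - fst (p i)\<bar> = 2" if "i < 4" for i
    using tour kb_knight_tour_step_cells_differ[OF _ tour, of i] kb_cell_2_2_short_step[of "p i" "p (Suc i)"]
      that N unfolding kb_knight_tour_def knight_adj_iff by (auto simp: abs_minus_commute)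
  have "i \<le> 4 \<Longrightarrow> 4 dvd fst (p i) - 2 * int i" for i
  proof (induction i)
    case 0
    then show ?case using tour unfolding kb_knight_tour_def by simp
  next
    case (Suc i)
    then have "4 dvd fst (p i) - 2 * int i" by simp
    moreover have "fst (p (Suc i)) - 2 * int (Suc i) = fst (p i) - 2 * int i
        \<or> fst (p (Suc i)) - 2 * int (Suc i) = fst (p i) - 2 * int i - 4"
      using long_step[of i] Suc.prems by (auto simp: abs_if split: if_splits)
    ultimately show ?case by (metis dvd_diff dvd_refl)
  qed
  from this[of 4] have "4 dvd fst (p 4) - 8" by simp
  moreover have "fst (p 4) = 2 \<or> fst (p 4) = -2" using cyl N unfolding kb_cylindrical_tour_def by auto
  ultimately show False by auto
qed

section \<open>Walks through all cells\<close>

type_synonym lattice_walk = "nat \<Rightarrow> int \<times> int"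

definition cyl_walk :: "int \<Rightarrow> int \<Rightarrow> lattice_walk \<Rightarrow> nat \<Rightarrow> bool" where
  "cyl_walk m n w L \<longleftrightarrow> int L = m * n \<and> w 0 = (0, 0) \<and> w L = (m, 0) \<and>
     (\<forall>i<L. knight_adj (w i) (w (Suc i))) \<and> inj_on (kb_cell m n \<circ> w) {..<L}"

lemma cyl_walk_cells_bij:
  assumes m: "0 < m" and n: "0 < n" and walk: "cyl_walk m n p N"
  shows "bij_betw (kb_cell m n \<circ> p) {..<N} ({0..<m} \<times> {0..<n})"
proof -
  have inj: "inj_on (kb_cell m n \<circ> p) {..<N}" using walk unfolding cyl_walk_def by blast
  moreover have "(kb_cell m n \<circ> p) ` {..<N} = {0..<m} \<times> {0..<n}"
  proof (rule card_subset_eq)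
    show "(kb_cell m n \<circ> p) ` {..<N} \<subseteq> {0..<m} \<times> {0..<n}"
      by (rule image_subsetI) (simp only: comp_apply kb_cell_mem_board[OF m n])
    have "int (card ({0..<m} \<times> {0..<n})) = int N"
      using walk m n unfolding cyl_walk_def by (simp add: card_cartesian_product)
    then show "card ((kb_cell m n \<circ> p) ` {..<N}) = card ({0..<m} \<times> {0..<n})"
      using card_image[OF inj] by (simp only: of_nat_eq_iff card_lessThan)
  qed simp
  ultimately show ?thesis unfolding bij_betw_def by blast
qed

lemma kb_same_edge_cells:
  assumes "0 < n" "kb_same_edge m n (p, p') (q, q')"
  shows "(kb_cell m n p = kb_cell m n q \<and> kb_cell m n p' = kb_cell m n q') \<or>
    (kb_cell m n p = kb_cell m n q' \<and> kb_cell m n p' = kb_cell m n q)"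
proof -
  obtain g where "g \<in> kbG m n" and g: "{g p, g p'} = {q, q'}"
    using assms(2) unfolding kb_same_edge_def by auto
  then have cell_g: "kb_cell m n (g x) = kb_cell m n x" for x
    using kb_same_vertex_iff_cell[OF assms(1), of m x "g x"] unfolding kb_same_vertex_def by auto
  have "(g p = q \<and> g p' = q') \<or> (g p = q' \<and> g p' = q)"
    using g by (simp add: doubleton_eq_iff)
  then show ?thesis using cell_g by metis
qed

lemma cyl_walk_edges_distinct:
  assumes n: "0 < n" and walk: "cyl_walk m n p N" and "3 \<le> N" "i < N" "j < N" "i \<noteq> j"
  shows "\<not> kb_same_edge m n (p i, p (Suc i)) (p j, p (Suc j))"
proof
  let ?cell = "\<lambda>i. kb_cell m n (p i)"
  \<comment> \<open>Cells determine indices once the closing index N is identified with 0.\<close>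
  define wrap where "wrap i = (if i = N then 0 else i)" for i
  have "?cell N = ?cell 0" using walk unfolding cyl_walk_def by (simp add: kb_cell_def)
  then have wrap: "wrap i < N" "?cell (wrap i) = ?cell i" if "i \<le> N" for i
    using that \<open>3 \<le> N\<close> unfolding wrap_def by (cases "i = N", simp_all)
  have cell_eq: "wrap i = wrap j" if "i \<le> N" "j \<le> N" "?cell i = ?cell j" for i j
    using walk wrap that unfolding cyl_walk_def inj_on_def by (metis comp_apply lessThan_iff)
  assume "kb_same_edge m n (p i, p (Suc i)) (p j, p (Suc j))"
  then have "(?cell i = ?cell j \<and> ?cell (Suc i) = ?cell (Suc j)) \<or>
      (?cell i = ?cell (Suc j) \<and> ?cell (Suc i) = ?cell j)"
    by (rule kb_same_edge_cells[OF n])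
  then have "(wrap i = wrap j \<and> wrap (Suc i) = wrap (Suc j)) \<or>
      (wrap i = wrap (Suc j) \<and> wrap (Suc i) = wrap j)"
    using cell_eq assms(4-6) by (meson Suc_leI less_imp_le)
  moreover have "wrap i = i" "wrap j = j" using assms(4,5) unfolding wrap_def by auto
  ultimately show False using assms(3-6) unfolding wrap_def by (auto split: if_splits)
qed

lemma kb_cylindrical_tour_of_cyl_walk:
  assumes m: "0 < m" and n: "0 < n" and walk: "cyl_walk m n p N"
    and edges: "\<forall>i<N. \<forall>j<N. i \<noteq> j \<longrightarrow> \<not> kb_same_edge m n (p i, p (Suc i)) (p j, p (Suc j))"
  shows "kb_cylindrical_tour m n p N"
proof -
  have bij: "bij_betw (kb_cell m n \<circ> p) {..<N} ({0..<m} \<times> {0..<n})"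
    by (rule cyl_walk_cells_bij[OF m n walk])
  have distinct: "\<not> kb_same_vertex m n (p i) (p j)" if "i < N" "j < N" "i \<noteq> j" for i j
    using bij that unfolding kb_same_vertex_iff_cell[OF n] bij_betw_def inj_on_def by auto
  have cover: "\<exists>i<N. kb_same_vertex m n q (p i)" for q
  proof -
    have "kb_cell m n q \<in> (kb_cell m n \<circ> p) ` {..<N}"
      using bij kb_cell_mem_board[OF m n] unfolding bij_betw_def by simp
    then show ?thesis unfolding kb_same_vertex_iff_cell[OF n] by auto
  qed
  show ?thesis
    using walk distinct cover edges
    unfolding kb_cylindrical_tour_def kb_knight_tour_def cyl_walk_def kb_same_vertex_iff_cell[OF n]
    by (auto simp: kb_cell_def)
qed

section \<open>Stacking and wrapping walks\<close>

definition hshift :: "int \<Rightarrow> int \<times> int \<Rightarrow> int \<times> int" where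
  "hshift c p = (fst p + c, snd p)"

lemma knight_adj_hshift [simp]: "knight_adj (hshift c p) (hshift c q) \<longleftrightarrow> knight_adj p q"
  by (simp add: knight_adj_def hshift_def)

lemma kb_cell_hshift_mult_eqD:
  assumes "0 < n" "0 < t"
    and "kb_cell (s * t) n (hshift (J * t) p) = kb_cell (s * t) n (hshift (J' * t) p')"
  shows "kb_cell t n p = kb_cell t n p'"
proof -
  obtain k j where motion: "hshift (J' * t) p' = kb_motion (s * t) n k j (hshift (J * t) p)"
    using assms(3) kb_cell_eq_iff_motion[OF assms(1)] by blast
  define j' where "j' = (if even k then J + j * s - J' else s - 1 + j * s - J - J')"
  have "p' = kb_motion t n k j' p"
    using motion unfolding j'_def hshift_def
    by (cases p; cases p') (auto simp: algebra_simps split: if_splits)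
  then show ?thesis using kb_cell_motion[OF assms(1)] by simp
qed

lemma kb_cell_hshift_mult_same_eqD:
  assumes "0 < n" "0 < t" "0 \<le> J" "J < s" "0 \<le> J'" "J' < s"
    and "kb_cell (s * t) n (hshift (J * t) p) = kb_cell (s * t) n (hshift (J' * t) p)"
  shows "J = J'"
proof -
  obtain k j where motion: "hshift (J' * t) p = kb_motion (s * t) n k j (hshift (J * t) p)"
    using assms(7) kb_cell_eq_iff_motion[OF assms(1)] by blast
  then have "k * n = 0" by (cases p) (simp add: hshift_def)
  then have "J' * t = J * t + j * s * t" using motion \<open>0 < n\<close> by (cases p) (simp add: hshift_def)
  then have "(J' - J - j * s) * t = 0" by (simp add: algebra_simps)
  then have "s dvd J' - J" using \<open>0 < t\<close> by simp
  moreover have "\<bar>J' - J\<bar> < s" using assms(3-6) by (simp add: abs_if)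
  ultimately show ?thesis using dvd_imp_le_int[of "J' - J" s] by (cases "J' = J") auto
qed

definition stack_walk :: "lattice_walk \<Rightarrow> nat \<Rightarrow> int \<Rightarrow> lattice_walk" where
  "stack_walk w L t i = hshift (int (i div L) * t) (w (i mod L))"

lemma cyl_walk_stack:
  assumes "0 < n" "0 < t" "0 < K" and walk: "cyl_walk t n w L"
  shows "cyl_walk (int K * t) n (stack_walk w L t) (K * L)"
proof -
  have "0 < L" using walk \<open>0 < n\<close> \<open>0 < t\<close> unfolding cyl_walk_def by (metis of_nat_0_less_iff mult_pos_pos)
  have step: "stack_walk w L t (Suc i) = hshift (int (i div L) * t) (w (Suc (i mod L)))" for i
  proof (cases "Suc (i mod L) = L")
    case True
    then have "Suc i mod L = 0" "Suc i div L = Suc (i div L)" by (simp_all add: mod_Suc div_Suc)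
    then show ?thesis
      using True walk unfolding stack_walk_def cyl_walk_def by (simp add: hshift_def algebra_simps)
  next
    case False
    then have "Suc i mod L = Suc (i mod L)" "Suc i div L = i div L" by (simp_all add: mod_Suc div_Suc)
    then show ?thesis unfolding stack_walk_def by simp
  qed
  have "knight_adj (stack_walk w L t i) (stack_walk w L t (Suc i))" for i
    using walk \<open>0 < L\<close> unfolding step unfolding stack_walk_def cyl_walk_def by simp
  moreover have "inj_on (kb_cell (int K * t) n \<circ> stack_walk w L t) {..<K * L}"
  proof (rule inj_onI)
    fix i i' assume i: "i \<in> {..<K * L}" and i': "i' \<in> {..<K * L}"
      and cell: "(kb_cell (int K * t) n \<circ> stack_walk w L t) i = (kb_cell (int K * t) n \<circ> stack_walk w L t) i'"
    then have big: "kb_cell (int K * t) n (hshift (int (i div L) * t) (w (i mod L)))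
        = kb_cell (int K * t) n (hshift (int (i' div L) * t) (w (i' mod L)))"
      unfolding stack_walk_def by simp
    then have "kb_cell t n (w (i mod L)) = kb_cell t n (w (i' mod L))"
      by (rule kb_cell_hshift_mult_eqD[OF \<open>0 < n\<close> \<open>0 < t\<close>])
    then have r: "i mod L = i' mod L"
      using walk \<open>0 < L\<close> unfolding cyl_walk_def inj_on_def by simp
    have "i div L < K" "i' div L < K"
      using i i' by (simp_all add: less_mult_imp_div_less)
    then have "int (i div L) = int (i' div L)"
      using big unfolding r by (intro kb_cell_hshift_mult_same_eqD[OF \<open>0 < n\<close> \<open>0 < t\<close>]) simp_all
    then show "i = i'" using r by (metis div_mult_mod_eq of_nat_eq_iff)
  qed
  ultimately show ?thesis
    using walk \<open>0 < L\<close> unfolding cyl_walk_def stack_walk_def by (simp add: hshift_def)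
qed

definition walk_join :: "lattice_walk \<Rightarrow> nat \<Rightarrow> lattice_walk \<Rightarrow> lattice_walk" where
  "walk_join v L w i = (if i < L then v i else hshift (fst (v L)) (w (i - L)))"

lemma walk_join_adj:
  assumes "\<forall>i<L. knight_adj (v i) (v (Suc i))" "\<forall>i<L'. knight_adj (w i) (w (Suc i))"
    and "v L = (t, 0)" "w 0 = (0, 0)" "i < L + L'"
  shows "knight_adj (walk_join v L w i) (walk_join v L w (Suc i))"
proof -
  consider "Suc i < L" | "Suc i = L" | "L \<le> i" by linarith
  then show ?thesis
  proof cases
    case 2
    then have "knight_adj (v i) (v L)" using assms(1) by auto
    then show ?thesis using assms 2 by (simp add: walk_join_def hshift_def)
  next
    case 3
    then have "Suc i - L = Suc (i - L)" by simp
    then show ?thesis using assms 3 by (simp add: walk_join_def)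
  qed (use assms in \<open>simp add: walk_join_def\<close>)
qed

definition in_strip :: "int \<Rightarrow> lattice_walk \<Rightarrow> nat \<Rightarrow> bool" where
  "in_strip m w L \<longleftrightarrow> (\<forall>i<L. 0 \<le> fst (w i) \<and> fst (w i) < m)"

lemma kb_cell_in_strip:
  "0 \<le> x \<Longrightarrow> x < m \<Longrightarrow> kb_cell m n (x, y) = (if even (y div n) then x else m - 1 - x, y mod n)"
  unfolding kb_cell_def by simp

definition wrap_walk :: "lattice_walk \<Rightarrow> nat \<Rightarrow> lattice_walk \<Rightarrow> nat \<Rightarrow> lattice_walk" where
  "wrap_walk b Lb w Lw = walk_join (walk_join b Lb w) (Lb + Lw) b"

context
  fixes b w :: lattice_walk and Lb Lw :: nat and u M n :: int
  assumes n: "0 < n" and u: "0 < u" and M: "0 \<le> M"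
    and b: "cyl_walk u n b Lb" "in_strip u b Lb"
    and w: "cyl_walk M n w Lw" "in_strip M w Lw"
begin

private abbreviation "W \<equiv> wrap_walk b Lb w Lw"

private definition loc :: "nat \<Rightarrow> nat" where
  "loc i = (if i < Lb then i else i - Lb - Lw)"

private lemma wrap_walk_mid:
  "Lb \<le> i \<Longrightarrow> i < Lb + Lw \<Longrightarrow> W i = hshift u (w (i - Lb))"
  using b unfolding wrap_walk_def walk_join_def cyl_walk_def by simp

private lemma wrap_walk_end:
  "\<not> (Lb \<le> i \<and> i < Lb + Lw) \<Longrightarrow> W i = hshift (if i < Lb then 0 else u + M) (b (loc i))"
  using b w unfolding wrap_walk_def walk_join_def cyl_walk_def loc_def
  by (auto simp: hshift_def add.commute)

private lemma wrap_walk_cell_mid: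
  assumes "Lb \<le> i" "i < Lb + Lw"
  shows "kb_cell (M + 2 * u) n (W i) = hshift u (kb_cell M n (w (i - Lb)))"
proof -
  obtain x y where "w (i - Lb) = (x, y)" by fastforce
  moreover have "0 \<le> x" "x < M" using w(2) assms calculation unfolding in_strip_def
    by (metis less_diff_conv2 add.commute fst_conv)+
  ultimately show ?thesis
    using assms u by (simp add: wrap_walk_mid kb_cell_in_strip hshift_def)
qed

private lemma wrap_walk_cell_end:
  assumes "\<not> (Lb \<le> i \<and> i < Lb + Lw)" "i < Lw + 2 * Lb"
  shows "kb_cell (M + 2 * u) n (W i) = hshift
    (if (i < Lb) = even (snd (b (loc i)) div n) then 0 else u + M) (kb_cell u n (b (loc i)))"
proof -
  obtain x y where "b (loc i) = (x, y)" by fastforce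
  moreover have "loc i < Lb" using assms unfolding loc_def by auto
  then have "0 \<le> x" "x < u" using b(2) calculation unfolding in_strip_def by (metis fst_conv)+
  ultimately show ?thesis
    using assms M by (auto simp: wrap_walk_end kb_cell_in_strip hshift_def)
qed

private lemma wrap_walk_cell_mid_iff:
  assumes "i < Lw + 2 * Lb"
  shows "(Lb \<le> i \<and> i < Lb + Lw) \<longleftrightarrow>
    u \<le> fst (kb_cell (M + 2 * u) n (W i)) \<and> fst (kb_cell (M + 2 * u) n (W i)) < u + M"
proof (cases "Lb \<le> i \<and> i < Lb + Lw")
  case True
  then have "0 < M * n" using w(1) unfolding cyl_walk_def by linarith
  then have "kb_cell M n (w (i - Lb)) \<in> {0..<M} \<times> {0..<n}"
    using kb_cell_mem_board n by (simp add: zero_less_mult_iff)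
  then show ?thesis using True by (auto simp: wrap_walk_cell_mid hshift_def mem_Times_iff)
next
  case False
  have "kb_cell u n (b (loc i)) \<in> {0..<u} \<times> {0..<n}" using kb_cell_mem_board[OF u n] .
  then show ?thesis using False assms by (auto simp: wrap_walk_cell_end hshift_def mem_Times_iff)
qed

private lemma wrap_walk_inj: "inj_on (kb_cell (M + 2 * u) n \<circ> W) {..<Lw + 2 * Lb}"
proof (rule inj_onI)
  let ?cell = "\<lambda>i. kb_cell (M + 2 * u) n (W i)"
  let ?mid = "\<lambda>i. Lb \<le> i \<and> i < Lb + Lw"
  fix i i' assume "i \<in> {..<Lw + 2 * Lb}" "i' \<in> {..<Lw + 2 * Lb}"
    and "(kb_cell (M + 2 * u) n \<circ> W) i = (kb_cell (M + 2 * u) n \<circ> W) i'"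
  then have i: "i < Lw + 2 * Lb" and i': "i' < Lw + 2 * Lb" and eq: "?cell i = ?cell i'" by auto
  then have "?mid i = ?mid i'" using wrap_walk_cell_mid_iff by presburger
  then consider "?mid i" "?mid i'" | "\<not> ?mid i" "\<not> ?mid i'" by blast
  then show "i = i'"
  proof cases
    case 1
    then have "kb_cell M n (w (i - Lb)) = kb_cell M n (w (i' - Lb))"
      using eq by (simp add: wrap_walk_cell_mid hshift_def prod_eq_iff)
    then have "i - Lb = i' - Lb" using w 1 unfolding cyl_walk_def inj_on_def by auto
    then show ?thesis using 1 by linarith
  next
    case 2
    let ?side = "\<lambda>i. (i < Lb) = even (snd (b (loc i)) div n)"
    have "?side i = ?side i' \<and> kb_cell u n (b (loc i)) = kb_cell u n (b (loc i'))"
      using eq kb_cell_mem_board[OF u n, of "b (loc i)"] kb_cell_mem_board[OF u n, of "b (loc i')"] 2 i i' M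
      by (auto simp: wrap_walk_cell_end hshift_def prod_eq_iff mem_Times_iff split: if_splits)
    moreover have "loc i < Lb" "loc i' < Lb" using 2 i i' unfolding loc_def by auto
    ultimately have "loc i = loc i'" using b(1) unfolding cyl_walk_def inj_on_def by auto
    moreover from this have "(i < Lb) = (i' < Lb)" using \<open>?side i = ?side i' \<and> _\<close> by (metis (full_types))
    ultimately show ?thesis using 2 unfolding loc_def by (auto split: if_splits)
  qed
qed

private lemma wrap_walk_in_strip: "in_strip (M + 2 * u) W (Lw + 2 * Lb)"
  unfolding in_strip_def
proof (intro allI impI)
  fix i assume "i < Lw + 2 * Lb"
  show "0 \<le> fst (W i) \<and> fst (W i) < M + 2 * u"
  proof (cases "Lb \<le> i \<and> i < Lb + Lw")
    case True
    then have "i - Lb < Lw" by linarith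
    then have "0 \<le> fst (w (i - Lb)) \<and> fst (w (i - Lb)) < M" using w(2) unfolding in_strip_def by blast
    then show ?thesis using True u by (simp add: wrap_walk_mid hshift_def)
  next
    case False
    then have "loc i < Lb" using \<open>i < Lw + 2 * Lb\<close> unfolding loc_def by auto
    then have "0 \<le> fst (b (loc i)) \<and> fst (b (loc i)) < u" using b(2) unfolding in_strip_def by blast
    then show ?thesis using False M u by (simp add: wrap_walk_end hshift_def)
  qed
qed

lemma cyl_walk_wrap:
  "cyl_walk (M + 2 * u) n W (Lw + 2 * Lb) \<and> in_strip (M + 2 * u) W (Lw + 2 * Lb)"
proof -
  have "0 < Lb" using b(1) n u unfolding cyl_walk_def by (metis mult_pos_pos of_nat_0_less_iff)
  have inner: "knight_adj (walk_join b Lb w i) (walk_join b Lb w (Suc i))" if "i < Lb + Lw" for i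
    using b(1) w(1) that by (intro walk_join_adj[where L' = Lw]) (auto simp: cyl_walk_def)
  have "walk_join b Lb w (Lb + Lw) = (u + M, 0)"
    using b(1) w(1) unfolding cyl_walk_def walk_join_def by (simp add: hshift_def add.commute)
  then have "knight_adj (W i) (W (Suc i))" if "i < Lw + 2 * Lb" for i
    using inner b(1) that unfolding wrap_walk_def
    by (intro walk_join_adj[where L' = Lb]) (auto simp: cyl_walk_def)
  moreover have "W (Lw + 2 * Lb) = (M + 2 * u, 0)"
    using b(1) unfolding cyl_walk_def by (simp add: wrap_walk_end loc_def hshift_def)
  ultimately show ?thesis
    using wrap_walk_inj wrap_walk_in_strip b(1) w(1) \<open>0 < Lb\<close> unfolding cyl_walk_def
    by (simp add: wrap_walk_end loc_def hshift_def algebra_simps)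
qed

end

lemma cyl_walk_wrap_iterate:
  assumes "0 < n" "0 < u" "0 \<le> M" "cyl_walk u n b Lb \<and> in_strip u b Lb"
    and "cyl_walk M n w Lw \<and> in_strip M w Lw"
  shows "\<exists>w' L'. cyl_walk (M + 2 * int j * u) n w' L' \<and> in_strip (M + 2 * int j * u) w' L'"
proof (induction j)
  case 0
  then show ?case using assms(5) by auto
next
  case (Suc j)
  then obtain w' L' where "cyl_walk (M + 2 * int j * u) n w' L'" "in_strip (M + 2 * int j * u) w' L'"
    by blast
  moreover have "0 \<le> M + 2 * int j * u" using assms(2,3) by simp
  ultimately have "cyl_walk (M + 2 * int j * u + 2 * u) n (wrap_walk b Lb w' L') (L' + 2 * Lb) \<and>
      in_strip (M + 2 * int j * u + 2 * u) (wrap_walk b Lb w' L') (L' + 2 * Lb)"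
    using cyl_walk_wrap assms(1,2,4) by blast
  then show ?case by (auto simp: algebra_simps)
qed

section \<open>Explicit walks\<close>

lemma successively_nth:
  "successively P xs \<Longrightarrow> Suc i < length xs \<Longrightarrow> P (xs ! i) (xs ! Suc i)"
  by (induction P xs arbitrary: i rule: successively.induct) (auto simp: less_Suc_eq_0_disj)

lemma cyl_walk_of_list:
  assumes "length xs = Suc L" "int L = m * n" "hd xs = (0, 0)" "last xs = (m, 0)"
    and "successively knight_adj xs" "distinct (map (kb_cell m n) (butlast xs))"
  shows "cyl_walk m n ((!) xs) L"
  unfolding cyl_walk_def
proof (intro conjI allI impI)
  show "xs ! 0 = (0, 0)" using assms(1,3) by (cases xs) simp_all
  show "xs ! L = (m, 0)" using assms(1,4) last_conv_nth[of xs] by fastforce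
  show "knight_adj (xs ! i) (xs ! Suc i)" if "i < L" for i
    using successively_nth[OF assms(5)] that assms(1) by simp
  show "inj_on (kb_cell m n \<circ> (!) xs) {..<L}"
    using assms(1,6) unfolding distinct_conv_nth inj_on_def by (simp add: nth_butlast) blast
qed (rule assms(2))

lemma in_strip_of_list:
  "length xs = Suc L \<Longrightarrow> \<forall>p \<in> set (butlast xs). 0 \<le> fst p \<and> fst p < m \<Longrightarrow> in_strip m ((!) xs) L"
  unfolding in_strip_def by (metis diff_Suc_1 length_butlast nth_butlast nth_mem)

text \<open>No walk of height 1 and width 3 or 5 stays inside its strip; odd widths from 7 on are
  therefore reached by wrapping the strip walks of width 7 and 9.\<close>

definition walk_2_1 :: "(int \<times> int) list" where
  "walk_2_1 = [(0,0), (1,2), (2,0)]"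

definition walk_3_1 :: "(int \<times> int) list" where
  "walk_3_1 = [(0,0), (-1,2), (1,1), (3,0)]"

definition walk_5_1 :: "(int \<times> int) list" where
  "walk_5_1 = [(0,0), (-1,2), (1,3), (2,1), (3,-1), (5,0)]"

definition walk_7_1 :: "(int \<times> int) list" where
  "walk_7_1 = [(0,0), (2,1), (3,3), (5,4), (6,2), (4,3), (5,1), (7,0)]"

definition walk_9_1 :: "(int \<times> int) list" where
  "walk_9_1 = [(0,0), (1,2), (3,3), (4,1), (6,2), (7,0), (5,1), (6,3), (8,2), (9,0)]"

definition walk_4_2 :: "(int \<times> int) list" where
  "walk_4_2 = [(0,0), (1,2), (3,3), (2,1), (0,2), (1,0), (3,1), (2,-1), (4,0)]"

definition walk_6_2 :: "(int \<times> int) list" where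
  "walk_6_2 = [(0,0), (1,2), (2,4), (0,3), (1,1), (2,3), (0,2), (2,1), (4,2), (3,4), (5,3), (4,1),
    (6,0)]"

definition walk_10_2 :: "(int \<times> int) list" where
  "walk_10_2 = [(0,0), (1,2), (2,4), (3,2), (4,4), (6,3), (5,1), (3,0), (5,-1), (6,1), (8,2), (9,0),
    (7,1), (5,0), (7,-1), (8,1), (9,-1), (7,0), (9,1), (8,-1), (10,0)]"

lemma cyl_walk_2_1: "cyl_walk 2 1 ((!) walk_2_1) 2 \<and> in_strip 2 ((!) walk_2_1) 2"
  by (intro conjI cyl_walk_of_list in_strip_of_list) (simp_all add: walk_2_1_def knight_adj_iff kb_cell_def)

lemma cyl_walk_3_1: "cyl_walk 3 1 ((!) walk_3_1) 3"
  by (intro cyl_walk_of_list) (simp_all add: walk_3_1_def knight_adj_iff kb_cell_def)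

lemma cyl_walk_5_1: "cyl_walk 5 1 ((!) walk_5_1) 5"
  by (intro cyl_walk_of_list) (simp_all add: walk_5_1_def knight_adj_iff kb_cell_def)

lemma cyl_walk_7_1: "cyl_walk 7 1 ((!) walk_7_1) 7 \<and> in_strip 7 ((!) walk_7_1) 7"
  by (intro conjI cyl_walk_of_list in_strip_of_list) (simp_all add: walk_7_1_def knight_adj_iff kb_cell_def)

lemma cyl_walk_9_1: "cyl_walk 9 1 ((!) walk_9_1) 9 \<and> in_strip 9 ((!) walk_9_1) 9"
  by (intro conjI cyl_walk_of_list in_strip_of_list) (simp_all add: walk_9_1_def knight_adj_iff kb_cell_def)

lemma cyl_walk_4_2: "cyl_walk 4 2 ((!) walk_4_2) 8 \<and> in_strip 4 ((!) walk_4_2) 8"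
  by (intro conjI cyl_walk_of_list in_strip_of_list) (simp_all add: walk_4_2_def knight_adj_iff kb_cell_def)

lemma cyl_walk_6_2: "cyl_walk 6 2 ((!) walk_6_2) 12 \<and> in_strip 6 ((!) walk_6_2) 12"
  by (intro conjI cyl_walk_of_list in_strip_of_list) (simp_all add: walk_6_2_def knight_adj_iff kb_cell_def)

lemma cyl_walk_10_2: "cyl_walk 10 2 ((!) walk_10_2) 20 \<and> in_strip 10 ((!) walk_10_2) 20"
  by (intro conjI cyl_walk_of_list in_strip_of_list) (simp_all add: walk_10_2_def knight_adj_iff kb_cell_def)

definition column_walk :: "nat \<Rightarrow> lattice_walk" where
  "column_walk k i = (if i \<le> k then (int (i mod 2), 2 * int i)
     else if i \<le> 2 * k then (3 - int (i mod 2), 4 * int k + 1 - 2 * int i) else (1, 0))"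

lemma cyl_walk_column:
  assumes "1 \<le> k"
  shows "cyl_walk 1 (2 * int k + 1) (column_walk k) (2 * k + 1)"
proof -
  have parity: "int (Suc i mod 2) = 1 - int (i mod 2)" "int (i mod 2) = 0 \<or> int (i mod 2) = 1" for i
    by (auto simp: mod_Suc)
  have "knight_adj (column_walk k i) (column_walk k (Suc i))" if i: "i < 2 * k + 1" for i
  proof -
    consider "i < k" | "i = k" | "k < i \<and> i < 2 * k" | "i = 2 * k" using i by linarith
    then show ?thesis using parity[of i] assms by cases (auto simp: column_walk_def knight_adj_iff)
  qed
  moreover have "inj_on (kb_cell 1 (2 * int k + 1) \<circ> column_walk k) {..<2 * k + 1}"
  proof (rule inj_onI)
    fix i j assume "i \<in> {..<2 * k + 1}" "j \<in> {..<2 * k + 1}"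
      and "(kb_cell 1 (2 * int k + 1) \<circ> column_walk k) i = (kb_cell 1 (2 * int k + 1) \<circ> column_walk k) j"
    \<comment> \<open>The heights visited are 0, 2, ..., 2k and then 2k - 1, ..., 3, 1.\<close>
    then have "(if i \<le> k then 2 * int i else 4 * int k + 1 - 2 * int i) =
        (if j \<le> k then 2 * int j else 4 * int k + 1 - 2 * int j)"
      by (auto simp: kb_cell_def column_walk_def split: if_splits)
    then show "i = j" by (auto split: if_splits) presburger+
  qed
  ultimately show ?thesis by (auto simp: cyl_walk_def column_walk_def)
qed

definition double_column_walk :: "nat \<Rightarrow> lattice_walk" where
  "double_column_walk n i = (if i \<le> n + 1 then (2 * int (i mod 2), int i)
     else if i \<le> 2 * n - 1 then (1 + 2 * int ((i - n) mod 2), 2 * int n + 1 - int i) else (2, 0))"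

lemma kb_cell_double_column_walk:
  assumes "3 \<le> n" "i < 2 * n"
  shows "kb_cell 2 (int n) (double_column_walk n i) = (if i < n then (0, int i)
    else if i \<le> n + 1 then (1, int i - int n) else (1, 2 * int n + 1 - int i))"
proof -
  consider "i < n" | "n \<le> i \<and> i \<le> n + 1" | "n + 2 \<le> i" using assms by linarith
  then show ?thesis
  proof cases
    case 1
    then have "int i div int n = 0" "int i mod int n = int i" by simp_all
    then show ?thesis using 1 by (simp add: kb_cell_def double_column_walk_def)
  next
    case 2
    then have div: "int i div int n = 1"
      using div_pos_geq[of "int n" "int i"] assms by simp
    moreover have "int i mod int n = int i - int n"
      using div minus_div_mult_eq_mod[of "int i" "int n"] by simp
    moreover have "(1 - 2 * int (i mod 2)) mod 2 = 1" by (simp add: mod_diff_eq[symmetric])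
    ultimately show ?thesis using 2 assms by (simp add: kb_cell_def double_column_walk_def)
  next
    case 3
    then show ?thesis using assms by (simp add: kb_cell_def double_column_walk_def)
  qed
qed

lemma cyl_walk_double_column:
  assumes "3 \<le> n"
  shows "cyl_walk 2 (int n) (double_column_walk n) (2 * n)"
proof -
  have parity: "int (Suc i mod 2) = 1 - int (i mod 2)" "int (i mod 2) = 0 \<or> int (i mod 2) = 1" for i
    by (auto simp: mod_Suc)
  have "knight_adj (double_column_walk n i) (double_column_walk n (Suc i))" if i: "i < 2 * n" for i
  proof -
    consider "i \<le> n" | "i = n + 1" | "n + 2 \<le> i \<and> i < 2 * n - 1" | "i = 2 * n - 1"
      using i by linarith
    then show ?thesis
    proof cases
      case 1
      then show ?thesis using parity[of i] by (auto simp: double_column_walk_def knight_adj_iff)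
    next
      case 2
      then have "double_column_walk n i = (2 * int ((n + 1) mod 2), int n + 1)"
        "double_column_walk n (Suc i) = (1, int n - 1)"
        using assms by (simp_all add: double_column_walk_def)
      then show ?thesis using parity[of n] by (auto simp: knight_adj_iff)
    next
      case 3
      then have "Suc i - n = Suc (i - n)" by linarith
      then show ?thesis using 3 parity[of "i - n"] by (auto simp: double_column_walk_def knight_adj_iff)
    next
      case 4
      then have "double_column_walk n i = (1 + 2 * int ((n - 1) mod 2), 2)"
        "double_column_walk n (Suc i) = (2, 0)"
        using assms by (simp_all add: double_column_walk_def)
      then show ?thesis using parity[of "n - 1"] by (auto simp: knight_adj_iff)
    qed
  qed
  moreover have "inj_on (kb_cell 2 (int n) \<circ> double_column_walk n) {..<2 * n}"
    using assms by (intro inj_onI) (auto simp: kb_cell_double_column_walk split: if_splits)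
  ultimately show ?thesis using assms by (auto simp: cyl_walk_def double_column_walk_def)
qed

section \<open>Existence of cylindrical tours\<close>

lemma int_eq_add_nat_mult_if_dvd:
  fixes m a d :: int
  assumes "0 < d" "a \<le> m" "d dvd m - a"
  shows "\<exists>j. m = a + int j * d"
proof -
  have "0 \<le> (m - a) div d" using assms(1,2) by (simp add: pos_imp_zdiv_nonneg_iff)
  moreover have "(m - a) div d * d = m - a" using assms(3) by simp
  ultimately show ?thesis by (intro exI[of _ "nat ((m - a) div d)"]) simp
qed

lemma cyl_walk_exists_by_stacking:
  assumes "0 < n" "0 < t" "cyl_walk t n w L" "0 < m" "t dvd m"
  shows "\<exists>w' L'. cyl_walk m n w' L'"
proof -
  obtain K where K: "m = int K * t" "0 < K"
    using int_eq_add_nat_mult_if_dvd[of t 0 m] assms(2,4,5) by (auto simp: zero_less_mult_iff)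
  show ?thesis using cyl_walk_stack[OF assms(1,2) K(2) assms(3)] K(1) by blast
qed

lemma cyl_walk_exists_by_wrapping:
  assumes "0 < n" "0 < u" "0 \<le> M" "cyl_walk u n b Lb \<and> in_strip u b Lb"
    and "cyl_walk M n w Lw \<and> in_strip M w Lw" "M \<le> m" "2 * u dvd m - M"
  shows "\<exists>w' L'. cyl_walk m n w' L'"
proof -
  obtain j where "m = M + int j * (2 * u)"
    using int_eq_add_nat_mult_if_dvd[of "2 * u" M m] assms(2,6,7) by auto
  then show ?thesis using cyl_walk_wrap_iterate[OF assms(1-5), of j] by (auto simp: algebra_simps)
qed

lemma cyl_walk_exists_odd_height:
  assumes "0 < m" "odd n" "3 \<le> n"
  shows "\<exists>w L. cyl_walk m n w L"
proof -
  obtain k where k: "n = 2 * int k + 1" "1 \<le> k"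
    using assms(2,3) by (auto elim!: oddE intro!: that[of "nat _"])
  show ?thesis
    using cyl_walk_exists_by_stacking[OF _ _ cyl_walk_column[OF k(2)]] assms(1) k(1) by simp
qed

lemma cyl_walk_exists_even_width:
  assumes "0 < m" "even m" "3 \<le> n"
  shows "\<exists>w L. cyl_walk m n w L"
  using cyl_walk_exists_by_stacking[OF _ _ cyl_walk_double_column[of "nat n"]] assms by simp

lemma cyl_walk_exists_height_1:
  assumes "2 \<le> m"
  shows "\<exists>w L. cyl_walk m 1 w L"
proof -
  have "even m \<or> m = 3 \<or> m = 5 \<or> 7 \<le> m \<and> 4 dvd m - 7 \<or> 9 \<le> m \<and> 4 dvd m - 9"
    using assms by presburger
  then consider "even m" | "m = 3" | "m = 5" | "7 \<le> m" "4 dvd m - 7" | "9 \<le> m" "4 dvd m - 9"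
    by blast
  then show ?thesis
  proof cases
    case 1
    then show ?thesis
      using cyl_walk_exists_by_stacking[OF _ _ cyl_walk_2_1[THEN conjunct1]] assms by simp
  next
    case 4
    then show ?thesis
      using cyl_walk_exists_by_wrapping[OF _ _ _ cyl_walk_2_1 cyl_walk_7_1] by simp
  next
    case 5
    then show ?thesis
      using cyl_walk_exists_by_wrapping[OF _ _ _ cyl_walk_2_1 cyl_walk_9_1] by simp
  qed (use cyl_walk_3_1 cyl_walk_5_1 in blast)+
qed

lemma cyl_walk_exists_height_2:
  assumes "4 \<le> m" "even m"
  shows "\<exists>w L. cyl_walk m 2 w L"
proof -
  have "4 dvd m \<or> 6 \<le> m \<and> 8 dvd m - 6 \<or> 10 \<le> m \<and> 8 dvd m - 10"
    using assms by presburger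
  then consider "4 dvd m" | "6 \<le> m" "8 dvd m - 6" | "10 \<le> m" "8 dvd m - 10"
    by blast
  then show ?thesis
  proof cases
    case 1
    then show ?thesis
      using cyl_walk_exists_by_stacking[OF _ _ cyl_walk_4_2[THEN conjunct1]] assms by simp
  next
    case 2
    then show ?thesis
      using cyl_walk_exists_by_wrapping[OF _ _ _ cyl_walk_4_2 cyl_walk_6_2] by simp
  next
    case 3
    then show ?thesis
      using cyl_walk_exists_by_wrapping[OF _ _ _ cyl_walk_4_2 cyl_walk_10_2] by simp
  qed
qed

lemma cyl_walk_exists:
  assumes "0 < m" "0 < n" "1 < m \<or> 1 < n" "\<not> (m = 2 \<and> n = 2)" "\<not> (odd m \<and> even n)"
  shows "\<exists>w L. cyl_walk m n w L"
proof (cases "odd n")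
  case True
  show ?thesis
  proof (cases "n = 1")
    case True
    then show ?thesis using cyl_walk_exists_height_1 assms(3) by simp
  next
    case False
    then have "3 \<le> n" using \<open>odd n\<close> assms(2) by presburger
    then show ?thesis using cyl_walk_exists_odd_height assms(1) \<open>odd n\<close> by blast
  qed
next
  case False
  then have "even m" using assms(5) by blast
  show ?thesis
  proof (cases "n = 2")
    case True
    then have "4 \<le> m" using \<open>even m\<close> assms(1,4) by presburger
    then show ?thesis using cyl_walk_exists_height_2 \<open>even m\<close> True by blast
  next
    case False
    then have "3 \<le> n" using \<open>\<not> odd n\<close> assms(2) by presburger
    then show ?thesis using cyl_walk_exists_even_width assms(1) \<open>even m\<close> by blast
  qed
qed

lemma kb_cylindrical_tour_2_1: "kb_cylindrical_tour 2 1 ((!) walk_2_1) 2"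
proof (rule kb_cylindrical_tour_of_cyl_walk)
  show "cyl_walk 2 1 ((!) walk_2_1) 2" using cyl_walk_2_1 by blast
  show "\<forall>i<2. \<forall>j<2. i \<noteq> j \<longrightarrow>
      \<not> kb_same_edge 2 1 (walk_2_1 ! i, walk_2_1 ! Suc i) (walk_2_1 ! j, walk_2_1 ! Suc j)"
  proof (intro allI impI notI)
    fix i j :: nat
    assume "i < 2" "j < 2" "i \<noteq> j"
      and "kb_same_edge 2 1 (walk_2_1 ! i, walk_2_1 ! Suc i) (walk_2_1 ! j, walk_2_1 ! Suc j)"
    then obtain k c where "{kb_motion 2 1 k c (walk_2_1 ! i), kb_motion 2 1 k c (walk_2_1 ! Suc i)}
        = {walk_2_1 ! j, walk_2_1 ! Suc j}"
      unfolding kb_same_edge_def kbG_eq by auto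
    moreover have "(i = 0 \<and> j = 1) \<or> (i = 1 \<and> j = 0)" using \<open>i < 2\<close> \<open>j < 2\<close> \<open>i \<noteq> j\<close> by auto
    ultimately show False
      by (auto simp: walk_2_1_def doubleton_eq_iff split: if_splits)
  qed
qed simp_all

lemma small_admissible_board:
  fixes m n :: int
  assumes "0 < m" "0 < n" "1 < m \<or> 1 < n" "\<not> (odd m \<and> even n)" "m * n < 3"
  shows "m = 2 \<and> n = 1"
proof -
  have "m \<le> m * n" "n \<le> m * n"
    using assms(1,2) by (simp_all add: mult_le_cancel_left1 mult_le_cancel_right1)
  then have "m = 1 \<or> m = 2" "n = 1 \<or> n = 2" using assms(1,2,5) by linarith+
  then show ?thesis using assms(3-5) by auto
qed

theorem theorem6p2:
  fixes m n :: int
  assumes "0 < m" and "0 < n" and "1 < m \<or> 1 < n"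
  shows "(\<exists>p N. kb_cylindrical_tour m n p N) \<longleftrightarrow>
           \<not> (m = 2 \<and> n = 2) \<and> \<not> (odd m \<and> even n)"
proof
  assume "\<exists>p N. kb_cylindrical_tour m n p N"
  then obtain p N where "kb_cylindrical_tour m n p N" by blast
  then show "\<not> (m = 2 \<and> n = 2) \<and> \<not> (odd m \<and> even n)"
    using no_kb_cylindrical_tour_2_2 kb_cylindrical_tour_odd_width_imp_odd_height[OF assms(1,2)]
    by blast
next
  assume admissible: "\<not> (m = 2 \<and> n = 2) \<and> \<not> (odd m \<and> even n)"
  then obtain w L where walk: "cyl_walk m n w L" using cyl_walk_exists assms by blast
  show "\<exists>p N. kb_cylindrical_tour m n p N"
  proof (cases "3 \<le> L")
    case True
    then show ?thesis
      using cyl_walk_edges_distinct[OF assms(2) walk] kb_cylindrical_tour_of_cyl_walk[OF assms(1,2) walk]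
      by blast
  next
    case False
    then have "m * n < 3" using walk unfolding cyl_walk_def by linarith
    then have "m = 2 \<and> n = 1" using small_admissible_board assms admissible by blast
    then show ?thesis using kb_cylindrical_tour_2_1 by blast
  qed
qed

end
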